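(* Let $m,k\in\mathbb{N}$, let $\beta,\mu\in\mathbb{C}$ with $\frac{\beta}{2}-m\notin\mathbb{Z}_0^-$, $\Re(\beta)>0$ and $\Re(\mu)>0$. Then \[ \int_0^\infty t^{\beta-1}e^{-\mu t}\,{}_2F_2\left[\begin{array}{r} -2m-1,\ -m-k-\tfrac{1}{2};\\ -2m-2k-1,\ \tfrac{\beta}{2}-m;\end{array}\mu t\right]_{2m+1} dt=0. \]
   Context: $\mathbb{N}=\{1,2,3,\dots\}$, $\mathbb{Z}_0^-=\{0,-1,-2,\dots\}$. For $a\in\mathbb{C}$ and $n\in\mathbb{N}_0$, $(a)_0=1$ and $(a)_n=a(a+1)\cdots(a+n-1)$. For $N\in\mathbb{N}_0$, the truncated series is ${}_2F_2\left[\begin{array}{r} a_1,a_2;\\ b_1,b_2;\end{array}z\right]_N=\sum_{n=0}^{N}\frac{(a_1)_n(a_2)_n}{(b_1)_n(b_2)_n}\frac{z^n}{n!}$ (first $N+1$ terms). The left side is the Mellin transform $\int_0^\infty t^{s-1}f(t)\,dt$ at $s=\beta$. *)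

theory Defs
  imports "HOL-Analysis.Analysis"
begin

definition hyp2F2_trunc :: "complex \<Rightarrow> complex \<Rightarrow> complex \<Rightarrow> complex \<Rightarrow> nat \<Rightarrow> complex \<Rightarrow> complex" where
  "hyp2F2_trunc a1 a2 b1 b2 N z =
     (\<Sum>n = 0..N. (pochhammer a1 n * pochhammer a2 n) / (pochhammer b1 n * pochhammer b2 n)
                    * z ^ n / of_nat (fact n))"

end

(* Write h_n(t) = t^(beta-1) (mu t)^n e^(-mu t). The primitive t^beta (mu t)^n e^(-mu t) vanishes
   at 0 and at infinity and has derivative (beta+n) h_n - h_(n+1), so the integral of h_n over
   (0,oo) is (beta)_n times that of h_0. The Mellin transform is therefore the integral of h_0
   times the terminating series 3F2(-N, a, beta; 2a, c; 1) with N = 2m+1, a = -m-k-1/2,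
   c = beta/2 - m, i.e. beta = 2c + N - 1. For odd N this series vanishes (a Watson-type sum):
   by Chu-Vandermonde the ratios (a)_n/(2a)_n are fixed by the signed binomial transform, while
   the weights w_n = (-N)_n (beta)_n / ((c)_n n!) satisfy sum_n w_n C(n,j) = (-1)^(N-j) w_j;
   exchanging the order of summation turns the series S into (-1)^N S. *)
theory Submission
  imports Defs "HOL-Computational_Algebra.Formal_Power_Series" "HOL-Real_Asymp.Real_Asymp"
begin

lemma pochhammer_neg_of_nat_div_fact:
  "pochhammer (- of_nat n :: 'a::field_char_0) j / fact j = (-1)^j * of_nat (n choose j)"
proof -
  have "(of_nat (n choose j) :: 'a) = (-1)^j * pochhammer (- of_nat n) j / fact j"
    by (simp add: binomial_gbinomial gbinomial_pochhammer)
  then show ?thesis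
    by (simp flip: power_mult_distrib)
qed

lemma binomial_transform_pochhammer_ratio:
  fixes a c :: "'a::field_char_0"
  assumes "\<And>i. i < n \<Longrightarrow> c \<noteq> - of_nat i"
  shows "(\<Sum>j=0..n. (-1)^j * of_nat (n choose j) * (pochhammer a j / pochhammer c j))
         = pochhammer (c - a) n / pochhammer c n"
proof -
  have "(\<Sum>j=0..n. (-1)^j * of_nat (n choose j) * (pochhammer a j / pochhammer c j))
      = (\<Sum>j=0..n. pochhammer a j * pochhammer (- of_nat n) j / (of_nat (fact j) * pochhammer c j))"
    by (intro sum.cong refl) (simp flip: pochhammer_neg_of_nat_div_fact)
  also have "\<dots> = pochhammer (c - a) n / pochhammer c n"
    using assms by (intro Vandermonde_pochhammer) auto
  finally show ?thesis .
qed

definition watson_coeff :: "nat \<Rightarrow> 'a::field_char_0 \<Rightarrow> nat \<Rightarrow> 'a" where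
  "watson_coeff N c n = pochhammer (- of_nat N) n * pochhammer (2 * c + of_nat N - 1) n
                          / (pochhammer c n * fact n)"

lemma watson_coeff_shift:
  fixes c :: "'a::field_char_0"
  assumes "c \<notin> \<int>\<^sub>\<le>\<^sub>0" and "j + M = N"
  shows "watson_coeff N c (j + i) * of_nat ((j + i) choose j)
       = watson_coeff N c j * (pochhammer (2 * c + of_nat N - 1 + of_nat j) i * pochhammer (- of_nat M) i
                                / (of_nat (fact i) * pochhammer (c + of_nat j) i))"
proof -
  have split: "pochhammer z (j + i) = pochhammer z j * pochhammer (z + of_nat j) i" for z :: 'a
    by (rule pochhammer_product')
  have shift: "- of_nat N + of_nat j = (- of_nat M :: 'a)"
    using assms(2) by auto
  have "pochhammer c j \<noteq> 0" "pochhammer (c + of_nat j) i \<noteq> 0"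
    using assms(1) split[of c] by (auto dest: pochhammer_eq_0_imp_nonpos_Int)
  moreover have "of_nat ((j + i) choose j) = (fact (j + i) / (fact j * fact i) :: 'a)"
    by (simp add: binomial_fact)
  ultimately show ?thesis
    unfolding watson_coeff_def split shift by (simp add: field_simps)
qed

lemma watson_coeff_binomial_sum:
  fixes c :: "'a::field_char_0"
  assumes c: "c \<notin> \<int>\<^sub>\<le>\<^sub>0" and "j \<le> N"
  shows "(\<Sum>n=0..N. watson_coeff N c n * of_nat (n choose j)) = (-1)^(N - j) * watson_coeff N c j"
proof -
  define M where "M = N - j"
  define b where "b = 2 * c + of_nat N - 1 + of_nat j"
  have NM: "j + M = N"
    using \<open>j \<le> N\<close> by (simp add: M_def)
  have cj: "c + of_nat j \<noteq> - of_nat i" for i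
  proof
    assume "c + of_nat j = - of_nat i"
    then have "c + of_nat (j + i) = 0"
      by (metis add.assoc eq_neg_iff_add_eq_0 of_nat_add)
    with c show False
      by (blast dest: plus_of_nat_eq_0_imp)
  qed
  have "(\<Sum>n=0..N. watson_coeff N c n * of_nat (n choose j))
      = (\<Sum>n=j..N. watson_coeff N c n * of_nat (n choose j))"
    by (rule sum.mono_neutral_right) auto
  also have "\<dots> = (\<Sum>i=0..M. watson_coeff N c (j + i) * of_nat ((j + i) choose j))"
    using sum.shift_bounds_cl_nat_ivl[of "\<lambda>n. watson_coeff N c n * of_nat (n choose j)" 0 j M] NM
    by (simp add: add.commute)
  also have "\<dots> = watson_coeff N c j * (\<Sum>i=0..M. pochhammer b i * pochhammer (- of_nat M) i
                                            / (of_nat (fact i) * pochhammer (c + of_nat j) i))"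
    unfolding sum_distrib_left b_def using watson_coeff_shift[OF c NM] by simp
  also have "\<dots> = watson_coeff N c j * (pochhammer (c + of_nat j - b) M / pochhammer (c + of_nat j) M)"
    using cj by (subst Vandermonde_pochhammer) auto
  also have "pochhammer (c + of_nat j - b) M = (-1)^M * pochhammer (c + of_nat j) M"
    \<comment> \<open>the only place where the numerator parameter 2c + N - 1 is used\<close>
  proof -
    have "c + of_nat j - b = - (c + of_nat N - 1)" and "c + of_nat N - 1 - of_nat M + 1 = c + of_nat j"
      using NM by (auto simp: b_def algebra_simps simp flip: NM)
    then show ?thesis
      by (simp only: pochhammer_minus)
  qed
  finally show ?thesis
    using pochhammer_eq_0_iff[of "c + of_nat j" M] cj by (simp add: M_def)
qed

lemma terminating_watson_sum_odd:
  fixes a c :: "'a::field_char_0"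
  assumes c: "c \<notin> \<int>\<^sub>\<le>\<^sub>0" and "odd N" and a: "\<And>i. i < N \<Longrightarrow> 2 * a \<noteq> - of_nat i"
  shows "(\<Sum>n=0..N. watson_coeff N c n * (pochhammer a n / pochhammer (2 * a) n)) = 0"
proof -
  define l where "l n = pochhammer a n / pochhammer (2 * a) n" for n
  define S where "S = (\<Sum>n=0..N. watson_coeff N c n * l n)"
  have l_self_dual: "l n = (\<Sum>j=0..N. (-1)^j * of_nat (n choose j) * l j)" if "n \<le> N" for n
  proof -
    have "l n = (\<Sum>j=0..n. (-1)^j * of_nat (n choose j) * l j)"
      using binomial_transform_pochhammer_ratio[of n "2 * a" a] a that by (simp add: l_def)
    also have "\<dots> = (\<Sum>j=0..N. (-1)^j * of_nat (n choose j) * l j)"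
      by (rule sum.mono_neutral_left) (use that in auto)
    finally show ?thesis .
  qed
  have "S = (\<Sum>n=0..N. \<Sum>j=0..N. (-1)^j * l j * (watson_coeff N c n * of_nat (n choose j)))"
    unfolding S_def by (intro sum.cong refl) (simp add: l_self_dual sum_distrib_left mult_ac)
  also have "\<dots> = (\<Sum>j=0..N. (-1)^j * l j * (\<Sum>n=0..N. watson_coeff N c n * of_nat (n choose j)))"
    by (subst sum.swap) (simp add: sum_distrib_left)
  also have "\<dots> = (\<Sum>j=0..N. (-1)^N * (watson_coeff N c j * l j))"
  proof (intro sum.cong refl)
    fix j assume "j \<in> {0..N}"
    then have "(\<Sum>n=0..N. watson_coeff N c n * of_nat (n choose j)) = (-1)^(N - j) * watson_coeff N c j"
      by (intro watson_coeff_binomial_sum[OF c]) auto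
    then have "(-1)^j * l j * (\<Sum>n=0..N. watson_coeff N c n * of_nat (n choose j))
             = ((-1)^j * (-1)^(N - j)) * (watson_coeff N c j * l j)"
      by (simp add: ac_simps)
    also have "(-1)^j * (-1)^(N - j) = ((-1)^N :: 'a)"
      using \<open>j \<in> {0..N}\<close> by (simp flip: power_add)
    finally show "(-1)^j * l j * (\<Sum>n=0..N. watson_coeff N c n * of_nat (n choose j))
                = (-1)^N * (watson_coeff N c j * l j)" .
  qed
  also have "\<dots> = - S"
    using \<open>odd N\<close> by (simp add: S_def sum_negf)
  finally show ?thesis
    by (simp add: S_def l_def)
qed

lemma has_integral_0_of_vanishing_primitive:
  fixes f F :: "real \<Rightarrow> 'a::euclidean_space"
  assumes deriv: "\<And>t. t > 0 \<Longrightarrow> (F has_vector_derivative f t) (at t)"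
    and cont: "\<And>t. t > 0 \<Longrightarrow> isCont f t"
    and integrable: "f absolutely_integrable_on {0<..}"
    and lim_0: "(F \<longlongrightarrow> 0) (at_right 0)" and lim_top: "(F \<longlongrightarrow> 0) at_top"
  shows "(f has_integral 0) {0<..}"
proof -
  have "(\<lambda>t. indicator {0<..} t *\<^sub>R f t) \<in> borel_measurable borel"
    using cont by (intro borel_measurable_continuous_on_indicator continuous_at_imp_continuous_on) auto
  with integrable have lborel_integrable: "set_integrable lborel {0<..} f"
    by (simp add: set_integrable_def integrable_completion)
  have "(LBINT t=0..\<infinity>. f t) = 0 - 0"
  proof (rule interval_integral_FTC_integrable)
    show "set_integrable lborel (einterval 0 \<infinity>) f"
      using lborel_integrable by (simp add: zero_ereal_def)
    show "((F \<circ> real_of_ereal) \<longlongrightarrow> 0) (at_right 0)"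
      using lim_0 by (simp add: zero_ereal_def ereal_tendsto_simps)
    show "((F \<circ> real_of_ereal) \<longlongrightarrow> 0) (at_left \<infinity>)"
      using lim_top by (simp add: ereal_tendsto_simps)
  qed (use deriv cont in \<open>auto simp: zero_ereal_def\<close>)
  then have "integral {0<..} f = 0"
    by (simp add: set_borel_integral_eq_integral[OF lborel_integrable] interval_lebesgue_integral_def
                  zero_ereal_def)
  with integrable_integral[OF set_lebesgue_integral_eq_integral(1)[OF integrable]] show ?thesis
    by simp
qed

definition gamma_integrand :: "complex \<Rightarrow> complex \<Rightarrow> nat \<Rightarrow> complex \<Rightarrow> complex" where
  "gamma_integrand \<beta> \<mu> n z = z powr (\<beta> - 1) * (\<mu> * z) ^ n * exp (- \<mu> * z)"

definition gamma_primitive :: "complex \<Rightarrow> complex \<Rightarrow> nat \<Rightarrow> complex \<Rightarrow> complex" where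
  "gamma_primitive \<beta> \<mu> n z = z powr \<beta> * (\<mu> * z) ^ n * exp (- \<mu> * z)"

lemma has_field_derivative_gamma_primitive:
  assumes z: "z \<notin> \<real>\<^sub>\<le>\<^sub>0"
  shows "(gamma_primitive \<beta> \<mu> n has_field_derivative
           (\<beta> + of_nat n) * gamma_integrand \<beta> \<mu> n z - gamma_integrand \<beta> \<mu> (Suc n) z) (at z)"
proof -
  have "z \<noteq> 0"
    using z by auto
  then have powr_\<beta>: "z powr \<beta> = z powr (\<beta> - 1) * z"
    using powr_add[of z "\<beta> - 1" 1] by simp
  show ?thesis
    unfolding gamma_primitive_def [abs_def]
    by (rule derivative_eq_intros refl z)+
       (cases n, simp_all add: gamma_integrand_def powr_\<beta> field_simps)
qed

lemma norm_gamma_primitive: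
  assumes "t > 0"
  shows "norm (gamma_primitive \<beta> \<mu> n (of_real t)) = t powr (Re \<beta> + real n) * norm \<mu> ^ n * exp (- Re \<mu> * t)"
  using assms by (simp add: gamma_primitive_def norm_mult norm_power norm_powr_real_powr norm_exp_eq_Re
                            powr_add powr_realpow power_mult_distrib)

lemma gamma_primitive_tendsto_0_at_right_0:
  assumes "Re \<beta> > 0"
  shows "((\<lambda>t. gamma_primitive \<beta> \<mu> n (of_real t)) \<longlongrightarrow> 0) (at_right 0)"
proof (rule tendsto_norm_zero_cancel, rule Lim_transform_eventually)
  show "((\<lambda>t. t powr (Re \<beta> + real n) * norm \<mu> ^ n * exp (- Re \<mu> * t)) \<longlongrightarrow> 0) (at_right 0)"
    using assms by real_asymp
  show "\<forall>\<^sub>F t in at_right 0. t powr (Re \<beta> + real n) * norm \<mu> ^ n * exp (- Re \<mu> * t)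
                            = norm (gamma_primitive \<beta> \<mu> n (of_real t))"
    using eventually_at_right_less[of 0] by eventually_elim (simp add: norm_gamma_primitive)
qed

lemma gamma_primitive_tendsto_0_at_top:
  assumes "Re \<mu> > 0"
  shows "((\<lambda>t. gamma_primitive \<beta> \<mu> n (of_real t)) \<longlongrightarrow> 0) at_top"
proof (rule tendsto_norm_zero_cancel, rule Lim_transform_eventually)
  show "((\<lambda>t. t powr (Re \<beta> + real n) * norm \<mu> ^ n * exp (- Re \<mu> * t)) \<longlongrightarrow> 0) at_top"
    using assms by real_asymp
  show "\<forall>\<^sub>F t in at_top. t powr (Re \<beta> + real n) * norm \<mu> ^ n * exp (- Re \<mu> * t)
                        = norm (gamma_primitive \<beta> \<mu> n (of_real t))"
    using eventually_gt_at_top[of 0] by eventually_elim (simp add: norm_gamma_primitive)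
qed

lemma isCont_gamma_integrand: "t > 0 \<Longrightarrow> isCont (\<lambda>t. gamma_integrand \<beta> \<mu> n (of_real t)) t"
  unfolding gamma_integrand_def by (intro continuous_intros) auto

lemma gamma_integrand_absolutely_integrable:
  assumes "Re \<beta> > 0" and "Re \<mu> > 0"
  shows "(\<lambda>t. gamma_integrand \<beta> \<mu> n (of_real t)) absolutely_integrable_on {0<..}"
proof (rule set_integrable_bound)
  show "(\<lambda>t. norm \<mu> ^ n * (complex_of_real t powr (\<beta> + of_nat n - 1) / of_real (exp (Re \<mu> * t))))
          absolutely_integrable_on {0<..}"
    using assms by (intro set_integrable_mult_right absolutely_integrable_Gamma_integral) auto
  show "set_borel_measurable lebesgue {0<..} (\<lambda>t. gamma_integrand \<beta> \<mu> n (of_real t))"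
    unfolding set_borel_measurable_def
    by (auto intro!: measurable_completion borel_measurable_continuous_on_indicator
                     continuous_at_imp_continuous_on isCont_gamma_integrand)
  have "norm (gamma_integrand \<beta> \<mu> n (of_real t))
      = norm (norm \<mu> ^ n * (complex_of_real t powr (\<beta> + of_nat n - 1) / of_real (exp (Re \<mu> * t))))"
    if "t > 0" for t
    using that by (simp add: gamma_integrand_def norm_mult norm_divide norm_power norm_powr_real_powr
                             norm_exp_eq_Re powr_add powr_diff powr_realpow power_mult_distrib exp_minus
                             field_simps)
  then show "AE t in lebesgue. t \<in> {0<..} \<longrightarrow> norm (gamma_integrand \<beta> \<mu> n (of_real t))
       \<le> norm (norm \<mu> ^ n * (complex_of_real t powr (\<beta> + of_nat n - 1) / of_real (exp (Re \<mu> * t))))"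
    by simp
qed

lemma gamma_integrand_has_integral:
  assumes "Re \<beta> > 0" and "Re \<mu> > 0"
  shows "((\<lambda>t. gamma_integrand \<beta> \<mu> n (of_real t))
           has_integral pochhammer \<beta> n * integral {0<..} (\<lambda>t. gamma_integrand \<beta> \<mu> 0 (of_real t)))
         {0<..}"
proof (induction n)
  case 0
  show ?case
    using set_lebesgue_integral_eq_integral(1)[OF gamma_integrand_absolutely_integrable[OF assms]]
    by (simp add: integrable_integral)
next
  case (Suc n)
  define h where "h n t = gamma_integrand \<beta> \<mu> n (of_real t)" for n t
  have "((\<lambda>t. (\<beta> + of_nat n) * h n t - h (Suc n) t) has_integral 0) {0<..}"
  proof (rule has_integral_0_of_vanishing_primitive)
    show "((\<lambda>t. gamma_primitive \<beta> \<mu> n (of_real t)) has_vector_derivative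
            (\<beta> + of_nat n) * h n t - h (Suc n) t) (at t)" if "t > 0" for t
      using that unfolding h_def
      by (intro has_vector_derivative_real_field has_field_derivative_gamma_primitive) auto
  qed (use assms in \<open>auto simp: h_def intro!: continuous_intros isCont_gamma_integrand
                                 gamma_integrand_absolutely_integrable
                                 gamma_primitive_tendsto_0_at_right_0 gamma_primitive_tendsto_0_at_top\<close>)
  from has_integral_diff[OF has_integral_mult_right[OF Suc.IH, where c = "\<beta> + of_nat n"] this]
  show ?case
    by (simp add: h_def pochhammer_rec' mult.assoc)
qed

lemma gamma_integrand_hyp2F2_trunc_expansion:
  "of_real t powr (\<beta> - 1) * exp (- \<mu> * of_real t) * hyp2F2_trunc a1 a2 b1 b2 N (\<mu> * of_real t)
   = (\<Sum>n=0..N. pochhammer a1 n * pochhammer a2 n / (pochhammer b1 n * pochhammer b2 n) / fact n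
                * gamma_integrand \<beta> \<mu> n (of_real t))"
  unfolding hyp2F2_trunc_def gamma_integrand_def sum_distrib_left
  by (intro sum.cong refl) (simp add: divide_inverse mult_ac)

lemma mellin_exp_hyp2F2_trunc_has_integral:
  assumes "Re \<beta> > 0" and "Re \<mu> > 0"
  shows "((\<lambda>t. of_real t powr (\<beta> - 1) * exp (- \<mu> * of_real t)
               * hyp2F2_trunc a1 a2 b1 b2 N (\<mu> * of_real t))
          has_integral
            (\<Sum>n=0..N. pochhammer a1 n * pochhammer a2 n / (pochhammer b1 n * pochhammer b2 n) / fact n
                         * pochhammer \<beta> n)
            * integral {0<..} (\<lambda>t. gamma_integrand \<beta> \<mu> 0 (of_real t))) {0<..}"
proof -
  have "((\<lambda>t. \<Sum>n=0..N. pochhammer a1 n * pochhammer a2 n / (pochhammer b1 n * pochhammer b2 n) / fact n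
                        * gamma_integrand \<beta> \<mu> n (of_real t))
         has_integral (\<Sum>n=0..N. pochhammer a1 n * pochhammer a2 n / (pochhammer b1 n * pochhammer b2 n)
                                   / fact n * (pochhammer \<beta> n
                                   * integral {0<..} (\<lambda>t. gamma_integrand \<beta> \<mu> 0 (of_real t))))) {0<..}"
    by (intro has_integral_sum finite_atLeastAtMost has_integral_mult_right
              gamma_integrand_has_integral assms)
  then show ?thesis
    unfolding gamma_integrand_hyp2F2_trunc_expansion by (simp add: sum_distrib_right mult.assoc)
qed

lemma watson_sum_negative_half_integer:
  fixes \<beta> :: complex
  assumes "\<beta> / 2 - of_nat m \<notin> \<int>\<^sub>\<le>\<^sub>0"
  shows "(\<Sum>n=0..2 * m + 1. pochhammer (- 2 * of_nat m - 1) n * pochhammer (- of_nat m - of_nat k - 1/2) n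
            / (pochhammer (- 2 * of_nat m - 2 * of_nat k - 1) n * pochhammer (\<beta> / 2 - of_nat m) n)
            / fact n * pochhammer \<beta> n) = 0"
proof -
  define N where "N = 2 * m + 1"
  define a :: complex where "a = - of_nat m - of_nat k - 1/2"
  define c where "c = \<beta> / 2 - of_nat m"
  have params: "- 2 * of_nat m - 1 = (- of_nat N :: complex)" "- 2 * of_nat m - 2 * of_nat k - 1 = 2 * a"
               "2 * c + of_nat N - 1 = \<beta>"
    by (simp_all add: N_def a_def c_def algebra_simps)
  have "2 * a \<noteq> - of_nat i" if "i < N" for i
  proof -
    have "2 * a = - of_nat (2 * m + 2 * k + 1)"
      by (simp add: a_def algebra_simps)
    then show ?thesis
      by (simp only: neg_equal_iff_equal of_nat_eq_iff) (use that in \<open>simp add: N_def\<close>)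
  qed
  then have "(\<Sum>n=0..N. watson_coeff N c n * (pochhammer a n / pochhammer (2 * a) n)) = 0"
    using assms by (intro terminating_watson_sum_odd) (simp_all add: c_def N_def)
  then show ?thesis
    unfolding watson_coeff_def params(3) N_def[symmetric] a_def[symmetric] c_def[symmetric] params(1,2)
    by (simp add: divide_inverse mult_ac)
qed

theorem mainTheorem18:
  fixes m k :: nat and \<beta> \<mu> :: complex
  assumes "m \<ge> 1" and "k \<ge> 1"
    and "\<beta> / 2 - of_nat m \<notin> \<int>\<^sub>\<le>\<^sub>0"
    and "Re \<beta> > 0" and "Re \<mu> > 0"
  shows "((\<lambda>t::real. (complex_of_real t) powr (\<beta> - 1) * exp (- \<mu> * complex_of_real t)
            * hyp2F2_trunc (- 2 * of_nat m - 1) (- of_nat m - of_nat k - 1/2)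
                           (- 2 * of_nat m - 2 * of_nat k - 1) (\<beta> / 2 - of_nat m)
                           (2 * m + 1) (\<mu> * complex_of_real t))
          has_integral 0) {0<..}"
  using mellin_exp_hyp2F2_trunc_has_integral[OF assms(4,5),
          of "- 2 * of_nat m - 1" "- of_nat m - of_nat k - 1/2" "- 2 * of_nat m - 2 * of_nat k - 1"
             "\<beta> / 2 - of_nat m" "2 * m + 1"]
  unfolding watson_sum_negative_half_integer[OF assms(3)] mult_zero_left .

end
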